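(* Let $p:\mathbb{R}\times\mathbb{R}\to\mathbb{R}$ be measurable with: (1) $p_{\alpha,\beta}>0$ almost everywhere; (2) $p_{\alpha,\beta}=p_{\beta,\alpha}$; (3) $p_{\alpha,\beta}$ is $\pi$-periodic in both arguments; (4) $p$ is essentially bounded. If $(\gamma_n)$ is a sequence in $L^\infty([0,\pi),\mathbb{R}^2)$ converging in the weak-star topology to $\gamma$ (i.e. each coordinate function converges weak-star in $L^\infty([0,\pi))=L^1([0,\pi))^*$), then $\lim_{n\to\infty}\omega_p(\gamma_n)=\omega_p(\gamma)$.
   Context: For $v,w\in\mathbb{R}^2$, $v\times w=v_1w_2-v_2w_1$. For $\gamma\in L^\infty([0,\pi),\mathbb{R}^2)$, \[ \omega_p(\gamma)=\int_0^\pi\int_\alpha^\pi p_{\alpha,\beta}\,\gamma(\alpha)\times\gamma(\beta)\,d\beta\,d\alpha. \] *)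

theory Defs
  imports "HOL-Analysis.Analysis"
begin

definition cross2 :: "real \<times> real \<Rightarrow> real \<times> real \<Rightarrow> real" where
  "cross2 v w = fst v * snd w - snd v * fst w"

definition Linf_0pi :: "(real \<Rightarrow> 'b::real_normed_vector) \<Rightarrow> bool" where
  "Linf_0pi g \<longleftrightarrow> set_borel_measurable lebesgue {0..<pi} g \<and>
     (\<exists>C. AE x in lebesgue. x \<in> {0..<pi} \<longrightarrow> norm (g x) \<le> C)"

definition weak_star_conv_0pi :: "(nat \<Rightarrow> real \<Rightarrow> real) \<Rightarrow> (real \<Rightarrow> real) \<Rightarrow> bool" where
  "weak_star_conv_0pi gs g \<longleftrightarrow>
     (\<forall>f. set_integrable lebesgue {0..<pi} f \<longrightarrow>
        (\<lambda>n. LINT x:{0..<pi}|lebesgue. gs n x * f x) \<longlonglongrightarrow> (LINT x:{0..<pi}|lebesgue. g x * f x))"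

definition omega_p :: "(real \<Rightarrow> real \<Rightarrow> real) \<Rightarrow> (real \<Rightarrow> real \<times> real) \<Rightarrow> real" where
  "omega_p p \<gamma> = (LINT \<alpha>:{0..<pi}|lebesgue. (LINT \<beta>:{\<alpha>..<pi}|lebesgue. p \<alpha> \<beta> * cross2 (\<gamma> \<alpha>) (\<gamma> \<beta>)))"

end

theory Submission
  imports Defs "HOL-Probability.Essential_Supremum"
begin

text \<open>
  Replace \<open>p\<close> by a bounded Borel kernel \<open>K\<close> that agrees with it almost everywhere on the
  half-plane \<open>\<alpha> \<le> \<beta>\<close> and vanishes below the diagonal. Writing \<open>u\<^sub>1, u\<^sub>2\<close> for the coordinates
  of \<open>\<gamma>\<close> extended by zero outside \<open>[0,\<pi>)\<close>, expanding the cross product gives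
  \<open>\<omega>\<^sub>p(\<gamma>) = \<langle>u\<^sub>1, K u\<^sub>2\<rangle> - \<langle>u\<^sub>2, K u\<^sub>1\<rangle>\<close> with \<open>(K v)(\<alpha>) = \<integral> K(\<alpha>,\<beta>) v(\<beta>) d\<beta>\<close>.
  A weak-star convergent sequence \<open>v\<^sub>n \<rightarrow> v\<close> in \<open>L\<^sup>\<infinity>\<close> is uniformly bounded (the uniform
  boundedness principle, proved by Sokal's gliding hump), so \<open>(K v\<^sub>n)(\<alpha>) \<rightarrow> (K v)(\<alpha>)\<close> boundedly
  for every \<open>\<alpha>\<close>, hence \<open>K v\<^sub>n \<rightarrow> K v\<close> in \<open>L\<^sup>1([0,\<pi>))\<close> by dominated convergence. Then
  \<open>\<langle>u\<^sub>n, K v\<^sub>n\<rangle> - \<langle>u, K v\<rangle> = \<langle>u\<^sub>n, K v\<^sub>n - K v\<rangle> + \<langle>u\<^sub>n - u, K v\<rangle> \<rightarrow> 0\<close>: the first term by the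
  uniform bound on \<open>u\<^sub>n\<close>, the second by weak-star convergence tested against \<open>K v \<in> L\<^sup>1\<close>.
\<close>

section \<open>Essentially bounded functions acting on integrable functions\<close>

lemma integrable_ess_bounded_mult:
  fixes g h :: "'a \<Rightarrow> real"
  assumes "g \<in> borel_measurable M" "AE x in M. \<bar>g x\<bar> \<le> B" "integrable M h"
  shows "integrable M (\<lambda>x. g x * h x)"
proof (rule Bochner_Integration.integrable_bound)
  show "integrable M (\<lambda>x. B * h x)" using assms(3) by simp
  show "AE x in M. norm (g x * h x) \<le> norm (B * h x)"
    using assms(2) by eventually_elim (auto simp: abs_mult intro: mult_right_mono)
qed (use assms in simp)

lemma abs_integral_ess_bounded_mult_le:
  fixes g h :: "'a \<Rightarrow> real"
  assumes "g \<in> borel_measurable M" "AE x in M. \<bar>g x\<bar> \<le> B" "integrable M h"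
  shows "\<bar>\<integral>x. g x * h x \<partial>M\<bar> \<le> B * (\<integral>x. \<bar>h x\<bar> \<partial>M)"
proof -
  have "\<bar>\<integral>x. g x * h x \<partial>M\<bar> \<le> (\<integral>x. \<bar>g x * h x\<bar> \<partial>M)"
    by (rule integral_abs_bound)
  also have "\<dots> \<le> (\<integral>x. B * \<bar>h x\<bar> \<partial>M)"
    using assms integrable_abs[OF integrable_ess_bounded_mult[OF assms]]
    by (intro integral_mono_AE) (auto simp: abs_mult intro: mult_right_mono elim!: eventually_mono)
  finally show ?thesis by simp
qed

lemma integrable_ess_bounded_support:
  fixes g :: "'a \<Rightarrow> real"
  assumes "S \<in> sets M" "emeasure M S < \<infinity>" "g \<in> borel_measurable M" "AE x in M. \<bar>g x\<bar> \<le> B"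
    and "\<And>x. x \<notin> S \<Longrightarrow> g x = 0"
  shows "integrable M g"
  using assms by (intro integrableI_bounded_set[where A=S and B=B]) (auto elim: eventually_mono)

lemma least_ess_bound_exists:
  fixes f :: "'a \<Rightarrow> real"
  assumes f: "f \<in> borel_measurable M" and B: "AE x in M. \<bar>f x\<bar> \<le> B"
  obtains N where "AE x in M. \<bar>f x\<bar> \<le> N"
    and "\<And>c. 0 \<le> c \<Longrightarrow> c < N \<Longrightarrow> \<not> (AE x in M. \<bar>f x\<bar> \<le> c)"
proof
  let ?E = "esssup M (\<lambda>x. ereal \<bar>f x\<bar>)"
  have meas: "(\<lambda>x. ereal \<bar>f x\<bar>) \<in> borel_measurable M" using f by measurable
  have E_le_B: "?E \<le> ereal B"
    using B by (intro esssup_I[OF meas]) (auto elim: eventually_mono)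
  show "AE x in M. \<bar>f x\<bar> \<le> max 0 (real_of_ereal ?E)"
    using esssup_AE[of "\<lambda>x. ereal \<bar>f x\<bar>" M]
  proof eventually_elim
    case (elim x)
    then show ?case using E_le_B by (cases ?E) auto
  qed
  fix c :: real assume c: "0 \<le> c" "c < max 0 (real_of_ereal ?E)"
  show "\<not> (AE x in M. \<bar>f x\<bar> \<le> c)"
  proof
    assume "AE x in M. \<bar>f x\<bar> \<le> c"
    then have "?E \<le> ereal c" by (intro esssup_I[OF meas]) (auto elim: eventually_mono)
    then show False using c by (cases ?E) auto
  qed
qed

lemma ess_bound_norming_function:
  fixes g :: "'a \<Rightarrow> real"
  assumes S: "S \<in> sets M" "emeasure M S < \<infinity>"
    and g[measurable]: "g \<in> borel_measurable M" and B: "AE x in M. \<bar>g x\<bar> \<le> B"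
    and support: "\<And>x. x \<in> space M \<Longrightarrow> x \<notin> S \<Longrightarrow> g x = 0"
    and c: "0 \<le> c" and not_bounded: "\<not> (AE x in M. \<bar>g x\<bar> \<le> c)"
  obtains h where "integrable M h" "(\<integral>x. \<bar>h x\<bar> \<partial>M) \<le> 1" "c \<le> (\<integral>x. g x * h x \<partial>M)"
proof -
  define A where "A = {x\<in>space M. c < \<bar>g x\<bar>}"
  have A[measurable]: "A \<in> sets M" unfolding A_def by measurable
  have "A \<subseteq> S" using support c by (force simp: A_def)
  then have A_finite: "emeasure M A < \<infinity>"
    using emeasure_mono[OF _ S(1)] S(2) by (meson le_less_trans)
  have "A \<notin> null_sets M"
  proof
    assume "A \<in> null_sets M"
    then have "AE x in M. \<bar>g x\<bar> \<le> c" by (rule AE_I') (auto simp: A_def)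
    with not_bounded show False by simp
  qed
  define m where "m = measure M A"
  have m: "0 < m"
    using \<open>A \<notin> null_sets M\<close> A_finite
    by (auto simp: m_def emeasure_eq_ennreal_measure zero_less_measure_iff)
  define h where "h x = indicator A x * sgn (g x) / m" for x
  have h_abs: "\<bar>h x\<bar> = indicator A x / m" for x
    using m c by (auto simp: h_def A_def indicator_def abs_sgn)
  have h_meas[measurable]: "h \<in> borel_measurable M" unfolding h_def by measurable
  have h_int: "integrable M h"
    by (rule integrableI_bounded_set[where A=A and B="1/m"])
       (use A_finite m in \<open>auto simp: h_abs h_def\<close>)
  have "(\<integral>x. \<bar>h x\<bar> \<partial>M) = 1"
    using A_finite m by (simp add: h_abs m_def)
  moreover have "c \<le> (\<integral>x. g x * h x \<partial>M)"
  proof -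
    have "c = (\<integral>x. indicator A x * c / m \<partial>M)"
      using A_finite m by (simp add: m_def)
    also have "\<dots> \<le> (\<integral>x. g x * h x \<partial>M)"
    proof (rule integral_mono)
      show "integrable M (\<lambda>x. indicator A x * c / m)"
        using A_finite by (auto intro!: integrable_real_mult_indicator)
      show "integrable M (\<lambda>x. g x * h x)"
        by (rule integrable_ess_bounded_mult[OF g B h_int])
      show "indicator A x * c / m \<le> g x * h x" if "x \<in> space M" for x
        using m that by (auto simp: h_def A_def indicator_def abs_sgn divide_right_mono)
    qed
    finally show ?thesis .
  qed
  ultimately show thesis using that h_int by simp
qed

lemma AE_summable_abs_if_summable_integral:
  fixes k :: "nat \<Rightarrow> 'a \<Rightarrow> real"
  assumes int: "\<And>i. integrable M (k i)" and sm: "summable (\<lambda>i. \<integral>x. \<bar>k i x\<bar> \<partial>M)"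
  shows "AE x in M. summable (\<lambda>i. \<bar>k i x\<bar>)"
proof -
  have [measurable]: "\<And>i. k i \<in> borel_measurable M" using int by auto
  have "(\<integral>\<^sup>+x. (\<Sum>i. ennreal \<bar>k i x\<bar>) \<partial>M) = (\<Sum>i. \<integral>\<^sup>+x. ennreal \<bar>k i x\<bar> \<partial>M)"
    by (intro nn_integral_suminf) auto
  also have "\<dots> = (\<Sum>i. ennreal (\<integral>x. \<bar>k i x\<bar> \<partial>M))"
    by (intro arg_cong[where f=suminf] ext nn_integral_eq_integral) (auto intro: int)
  also have "\<dots> \<noteq> \<infinity>"
    using sm by (simp add: ennreal_suminf_neq_top)
  finally have "AE x in M. (\<Sum>i. ennreal \<bar>k i x\<bar>) \<noteq> \<infinity>"
    by (intro nn_integral_PInf_AE) auto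
  then show ?thesis
    by eventually_elim (auto intro: summable_suminf_not_top)
qed

lemma
  fixes g :: "'a \<Rightarrow> real" and k :: "nat \<Rightarrow> 'a \<Rightarrow> real"
  assumes g: "g \<in> borel_measurable M" and B: "AE x in M. \<bar>g x\<bar> \<le> B"
    and int: "\<And>i. integrable M (k i)" and sm: "summable (\<lambda>i. \<integral>x. \<bar>k i x\<bar> \<partial>M)"
  shows integrable_suminf_abs_summable: "integrable M (\<lambda>x. \<Sum>i. k i x)"
    and sums_integral_ess_bounded_mult:
      "(\<lambda>i. \<integral>x. g x * k i x \<partial>M) sums (\<integral>x. g x * (\<Sum>i. k i x) \<partial>M)"
proof -
  have ae: "AE x in M. summable (\<lambda>i. \<bar>k i x\<bar>)"
    by (rule AE_summable_abs_if_summable_integral[OF int sm])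
  show int_sum: "integrable M (\<lambda>x. \<Sum>i. k i x)"
    using ae sm by (intro integrable_suminf[OF int]) simp_all
  have B': "AE x in M. \<bar>g x\<bar> \<le> \<bar>B\<bar>" using B by eventually_elim auto
  have int_gk: "integrable M (\<lambda>x. g x * k i x)" for i
    by (rule integrable_ess_bounded_mult[OF g B' int])
  have ae_gk: "AE x in M. summable (\<lambda>i. norm (g x * k i x))"
    using ae by eventually_elim (auto simp: abs_mult intro: summable_mult)
  have "(\<integral>x. norm (g x * k i x) \<partial>M) \<le> \<bar>B\<bar> * (\<integral>x. \<bar>k i x\<bar> \<partial>M)" for i
    using abs_integral_ess_bounded_mult_le[of "\<lambda>x. \<bar>g x\<bar>" M "\<bar>B\<bar>" "\<lambda>x. \<bar>k i x\<bar>"] g B' int[of i]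
    by (simp add: abs_mult)
  then have sm_gk: "summable (\<lambda>i. \<integral>x. norm (g x * k i x) \<partial>M)"
    by (intro summable_comparison_test[OF _ summable_mult[OF sm, of "\<bar>B\<bar>"]]) auto
  have "(\<lambda>i. \<integral>x. g x * k i x \<partial>M) sums (\<integral>x. (\<Sum>i. g x * k i x) \<partial>M)"
    by (rule sums_integral[OF int_gk ae_gk sm_gk])
  also have "(\<integral>x. (\<Sum>i. g x * k i x) \<partial>M) = (\<integral>x. g x * (\<Sum>i. k i x) \<partial>M)"
    using ae g borel_measurable_integrable[OF int_sum]
      borel_measurable_integrable[OF integrable_suminf[OF int_gk ae_gk sm_gk]]
    by (intro integral_cong_AE) (auto simp: suminf_mult summable_rabs_cancel elim!: eventually_mono)
  finally show "(\<lambda>i. \<integral>x. g x * k i x \<partial>M) sums (\<integral>x. g x * (\<Sum>i. k i x) \<partial>M)" .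
qed

lemma tendsto_integral_mult_weak_strong:
  fixes f u :: "nat \<Rightarrow> 'a \<Rightarrow> real"
  assumes f_meas: "\<And>n. f n \<in> borel_measurable M" and f_bound: "\<And>n. AE x in M. \<bar>f n x\<bar> \<le> B"
    and u_int: "\<And>n. integrable M (u n)" and u0_int: "integrable M u0"
    and strong: "(\<lambda>n. \<integral>x. \<bar>u n x - u0 x\<bar> \<partial>M) \<longlonglongrightarrow> 0"
    and weak: "(\<lambda>n. \<integral>x. f n x * u0 x \<partial>M) \<longlonglongrightarrow> (\<integral>x. f0 x * u0 x \<partial>M)"
  shows "(\<lambda>n. \<integral>x. f n x * u n x \<partial>M) \<longlonglongrightarrow> (\<integral>x. f0 x * u0 x \<partial>M)"
proof -
  have "\<bar>(\<integral>x. f n x * u n x \<partial>M) - (\<integral>x. f n x * u0 x \<partial>M)\<bar>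
      \<le> B * (\<integral>x. \<bar>u n x - u0 x\<bar> \<partial>M)" for n
  proof -
    have "(\<integral>x. f n x * u n x \<partial>M) - (\<integral>x. f n x * u0 x \<partial>M) = (\<integral>x. f n x * (u n x - u0 x) \<partial>M)"
      using integrable_ess_bounded_mult[OF f_meas f_bound u_int]
        integrable_ess_bounded_mult[OF f_meas f_bound u0_int]
      by (simp add: right_diff_distrib)
    also have "\<bar>\<dots>\<bar> \<le> B * (\<integral>x. \<bar>u n x - u0 x\<bar> \<partial>M)"
      using u_int u0_int by (intro abs_integral_ess_bounded_mult_le[OF f_meas f_bound]) auto
    finally show ?thesis .
  qed
  then have "(\<lambda>n. (\<integral>x. f n x * u n x \<partial>M) - (\<integral>x. f n x * u0 x \<partial>M)) \<longlonglongrightarrow> 0"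
    by (intro Lim_null_comparison[OF _ tendsto_mult_right_zero[OF strong, of B]]) auto
  from tendsto_add[OF this weak] show ?thesis
    by simp
qed

section \<open>Uniform boundedness by a gliding hump\<close>

text \<open>Sokal's choice of signs: the \<open>k\<close>-th hump enters with the sign of the partial sum seen by
  the \<open>k\<close>-th functional, so it can only enlarge that sum.\<close>

fun hump_sign :: "(nat \<Rightarrow> nat \<Rightarrow> real) \<Rightarrow> nat \<Rightarrow> real" where
  "hump_sign a k = (if 0 \<le> (\<Sum>i<k. hump_sign a i * (1/3)^i * a k i) then 1 else -1)"

declare hump_sign.simps [simp del] \<comment> \<open>the equation would unfold forever\<close>

lemma abs_hump_sign [simp]: "\<bar>hump_sign a k\<bar> = 1"
  by (subst hump_sign.simps) simp

lemma hump_sign_series_lower_bound: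
  fixes a :: "nat \<Rightarrow> nat \<Rightarrow> real" and N :: "nat \<Rightarrow> real"
  assumes bound: "\<And>i. \<bar>a k i\<bar> \<le> N k" and diag: "2/3 * N k \<le> a k k"
  shows "N k * (1/3)^k / 6 \<le> \<bar>\<Sum>i. hump_sign a i * (1/3)^i * a k i\<bar>"
proof -
  define t where "t i = hump_sign a i * (1/3)^i * a k i" for i
  define P where "P = (\<Sum>i<k. t i)"
  have t_le: "\<bar>t i\<bar> \<le> N k * (1/3)^i" for i
    using bound[of i] by (simp add: t_def abs_mult mult.commute)
  have "summable (\<lambda>i. N k * (1/3::real)^i)"
    by (intro summable_mult summable_geometric) simp
  then have t_summable: "summable t"
    by (rule summable_comparison_test'[where N=0]) (use t_le in auto)
  have split: "(\<Sum>i. t i) = (\<Sum>i<Suc k. t i) + (\<Sum>j. t (j + Suc k))"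
    using suminf_split_initial_segment[OF t_summable, of "Suc k"] by simp
  have head: "(1/3)^k * (2/3 * N k) \<le> \<bar>\<Sum>i<Suc k. t i\<bar>"
  proof -
    have sign: "hump_sign a k = (if 0 \<le> P then 1 else -1)"
      by (subst hump_sign.simps) (simp add: P_def t_def)
    have "0 \<le> (1/3::real)^k * a k k"
      using diag bound[of k] by simp
    then have "\<bar>P + t k\<bar> = \<bar>P\<bar> + (1/3)^k * a k k"
      by (cases "0 \<le> P") (simp_all add: t_def sign)
    also have "\<dots> \<ge> (1/3)^k * (2/3 * N k)"
      using diag by (simp add: add_increasing)
    finally show ?thesis by (simp add: P_def)
  qed
  have tail: "\<bar>\<Sum>j. t (j + Suc k)\<bar> \<le> (1/3)^k * (N k / 2)"
  proof -
    have geom: "(\<lambda>j. N k * (1/3)^Suc k * (1/3)^j) sums (N k * (1/3)^Suc k * (1 / (1 - 1/3)))"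
      by (intro sums_mult geometric_sums) simp
    have "\<bar>t (j + Suc k)\<bar> \<le> N k * (1/3)^Suc k * (1/3)^j" for j
      using t_le[of "j + Suc k"] by (simp add: power_add mult_ac)
    then have "norm (\<Sum>j. t (j + Suc k)) \<le> (\<Sum>j. N k * (1/3)^Suc k * (1/3)^j)"
      using sums_summable[OF geom] by (intro norm_suminf_le) auto
    also have "\<dots> = (1/3)^k * (N k / 2)"
      using sums_unique[OF geom] by simp
    finally show ?thesis by simp
  qed
  have "\<bar>\<Sum>i<Suc k. t i\<bar> - \<bar>\<Sum>j. t (j + Suc k)\<bar> \<le> \<bar>\<Sum>i. t i\<bar>"
    unfolding split by arith
  then have "(1/3)^k * (2/3 * N k) - (1/3)^k * (N k / 2) \<le> \<bar>\<Sum>i. t i\<bar>"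
    using head tail by linarith
  then show ?thesis
    by (simp add: t_def)
qed

lemma hump_sign_series_unbounded:
  fixes a :: "nat \<Rightarrow> nat \<Rightarrow> real" and N :: "nat \<Rightarrow> real"
  assumes bound: "\<And>k i. \<bar>a k i\<bar> \<le> N k" and diag: "\<And>k. 2/3 * N k \<le> a k k"
    and growth: "\<And>k. 4^k \<le> N k"
  shows "\<not> Bseq (\<lambda>k. \<Sum>i. hump_sign a i * (1/3)^i * a k i)"
proof
  assume "Bseq (\<lambda>k. \<Sum>i. hump_sign a i * (1/3)^i * a k i)"
  then obtain B where B: "\<And>k. \<bar>\<Sum>i. hump_sign a i * (1/3)^i * a k i\<bar> \<le> B"
    by (auto simp: Bseq_def)
  obtain k where k: "6 * B < (4/3::real)^k"
    using real_arch_pow[of "4/3" "6 * B"] by auto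
  have "(4/3::real)^k / 6 = 4^k * (1/3)^k / 6"
    by (simp add: power_divide)
  also have "\<dots> \<le> N k * (1/3)^k / 6"
    using growth[of k] by (simp add: divide_right_mono)
  also have "\<dots> \<le> B"
    using hump_sign_series_lower_bound[OF bound diag] B[of k] by (rule order_trans)
  finally show False using k by linarith
qed

lemma gliding_hump:
  fixes f y :: "nat \<Rightarrow> 'a \<Rightarrow> real" and N :: "nat \<Rightarrow> real"
  assumes f_meas: "\<And>k. f k \<in> borel_measurable M"
    and f_bound: "\<And>k. AE x in M. \<bar>f k x\<bar> \<le> N k" and growth: "\<And>k. 4^k \<le> N k"
    and y_int: "\<And>k. integrable M (y k)" and y_norm: "\<And>k. (\<integral>x. \<bar>y k x\<bar> \<partial>M) \<le> 1"
    and norming: "\<And>k. 2/3 * N k \<le> (\<integral>x. f k x * y k x \<partial>M)"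
  obtains h where "integrable M h" and "\<not> Bseq (\<lambda>k. \<integral>x. f k x * h x \<partial>M)"
proof -
  define a where "a k i = (\<integral>x. f k x * y i x \<partial>M)" for k i
  define u where "u i = (\<lambda>x. hump_sign a i * (1/3)^i * y i x)" for i
  have N_nonneg: "0 \<le> N k" for k
    using order_trans[OF _ growth[of k]] by simp
  have a_bound: "\<bar>a k i\<bar> \<le> N k" for k i
  proof -
    have "\<bar>a k i\<bar> \<le> N k * (\<integral>x. \<bar>y i x\<bar> \<partial>M)"
      unfolding a_def by (rule abs_integral_ess_bounded_mult_le[OF f_meas f_bound y_int])
    also have "\<dots> \<le> N k"
      using y_norm[of i] N_nonneg[of k] by (rule mult_left_le)
    finally show ?thesis .
  qed
  have u_int: "integrable M (u i)" for i
    using y_int[of i] by (simp add: u_def)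
  have "(\<integral>x. \<bar>u i x\<bar> \<partial>M) \<le> (1/3)^i" for i
    using y_norm[of i] by (simp add: u_def abs_mult mult_left_le)
  then have u_summable: "summable (\<lambda>i. \<integral>x. \<bar>u i x\<bar> \<partial>M)"
    by (intro summable_comparison_test'[OF summable_geometric[of "1/3::real"]]) auto
  have u_coeff: "(\<integral>x. f k x * u i x \<partial>M) = hump_sign a i * (1/3)^i * a k i" for k i
  proof -
    have "(\<lambda>x. f k x * u i x) = (\<lambda>x. hump_sign a i * (1/3)^i * (f k x * y i x))"
      by (simp add: u_def fun_eq_iff mult_ac)
    then show ?thesis by (simp add: a_def)
  qed
  have "(\<lambda>i. hump_sign a i * (1/3)^i * a k i) sums (\<integral>x. f k x * (\<Sum>i. u i x) \<partial>M)" for k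
    using sums_integral_ess_bounded_mult[OF f_meas f_bound u_int u_summable] by (simp add: u_coeff)
  then have "(\<lambda>k. \<integral>x. f k x * (\<Sum>i. u i x) \<partial>M) = (\<lambda>k. \<Sum>i. hump_sign a i * (1/3)^i * a k i)"
    by (simp add: fun_eq_iff sums_unique)
  moreover have "\<not> Bseq (\<lambda>k. \<Sum>i. hump_sign a i * (1/3)^i * a k i)"
    using a_bound _ growth by (rule hump_sign_series_unbounded) (unfold a_def, rule norming)
  ultimately show thesis
    using that integrable_suminf_abs_summable[OF f_meas f_bound u_int u_summable] by auto
qed

lemma norming_sequence_if_not_uniformly_ess_bounded:
  fixes f :: "nat \<Rightarrow> 'a \<Rightarrow> real"
  assumes S: "S \<in> sets M" "emeasure M S < \<infinity>"
    and f_meas: "\<And>n. f n \<in> borel_measurable M"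
    and f_bounded: "\<And>n. \<exists>B. AE x in M. \<bar>f n x\<bar> \<le> B"
    and f_support: "\<And>n x. x \<in> space M \<Longrightarrow> x \<notin> S \<Longrightarrow> f n x = 0"
    and unbounded: "\<not> (\<exists>C. \<forall>n. AE x in M. \<bar>f n x\<bar> \<le> C)"
  obtains \<nu> N y where "\<And>k. AE x in M. \<bar>f (\<nu> k) x\<bar> \<le> N k" and "\<And>k. 4^k \<le> N k"
    and "\<And>k. integrable M (y k)" and "\<And>k. (\<integral>x. \<bar>y k x\<bar> \<partial>M) \<le> 1"
    and "\<And>k. 2/3 * N k \<le> (\<integral>x. f (\<nu> k) x * y k x \<partial>M)"
proof -
  define Q where "Q k n N h \<longleftrightarrow> (AE x in M. \<bar>f n x\<bar> \<le> N) \<and> 4^k \<le> N \<and> integrable M h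
      \<and> (\<integral>x. \<bar>h x\<bar> \<partial>M) \<le> 1 \<and> 2/3 * N \<le> (\<integral>x. f n x * h x \<partial>M)" for k :: nat and n N h
  have "\<exists>n N h. Q k n N h" for k
  proof -
    obtain n where n: "\<not> (AE x in M. \<bar>f n x\<bar> \<le> 4^k)"
      using unbounded by blast
    obtain B where "AE x in M. \<bar>f n x\<bar> \<le> B"
      using f_bounded by blast
    then obtain N where N: "AE x in M. \<bar>f n x\<bar> \<le> N"
      and least: "\<And>c. 0 \<le> c \<Longrightarrow> c < N \<Longrightarrow> \<not> (AE x in M. \<bar>f n x\<bar> \<le> c)"
      using least_ess_bound_exists[OF f_meas] by metis
    have "4^k \<le> N"
    proof (rule ccontr)
      assume "\<not> 4^k \<le> N"
      with N have "AE x in M. \<bar>f n x\<bar> \<le> 4^k" by (auto elim: eventually_mono)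
      with n show False ..
    qed
    then have "1 \<le> N"
      using one_le_power[of "4::real" k] by linarith
    have "0 \<le> 2/3 * N"
      using \<open>1 \<le> N\<close> by simp
    moreover have "\<not> (AE x in M. \<bar>f n x\<bar> \<le> 2/3 * N)"
      using \<open>1 \<le> N\<close> by (intro least) auto
    ultimately obtain h where "integrable M h" "(\<integral>x. \<bar>h x\<bar> \<partial>M) \<le> 1" "2/3 * N \<le> (\<integral>x. f n x * h x \<partial>M)"
      using ess_bound_norming_function[OF S f_meas N f_support] by blast
    with N \<open>4^k \<le> N\<close> show ?thesis
      unfolding Q_def by blast
  qed
  then obtain \<nu> N y where "\<And>k. Q k (\<nu> k) (N k) (y k)"
    by metis
  with that show thesis
    unfolding Q_def by blast
qed

lemma uniform_ess_bound_if_Bseq_integral_mult: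
  fixes f :: "nat \<Rightarrow> 'a \<Rightarrow> real"
  assumes S: "S \<in> sets M" "emeasure M S < \<infinity>"
    and f_meas: "\<And>n. f n \<in> borel_measurable M"
    and f_bounded: "\<And>n. \<exists>B. AE x in M. \<bar>f n x\<bar> \<le> B"
    and f_support: "\<And>n x. x \<in> space M \<Longrightarrow> x \<notin> S \<Longrightarrow> f n x = 0"
    and Bseq: "\<And>h. integrable M h \<Longrightarrow> Bseq (\<lambda>n. \<integral>x. f n x * h x \<partial>M)"
  obtains C where "\<And>n. AE x in M. \<bar>f n x\<bar> \<le> C"
proof -
  have "\<exists>C. \<forall>n. AE x in M. \<bar>f n x\<bar> \<le> C"
  proof (rule ccontr)
    assume unbounded: "\<not> (\<exists>C. \<forall>n. AE x in M. \<bar>f n x\<bar> \<le> C)"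
    obtain \<nu> N y where bound: "\<And>k. AE x in M. \<bar>f (\<nu> k) x\<bar> \<le> N k" and growth: "\<And>k. 4^k \<le> N k"
      and y: "\<And>k. integrable M (y k)" "\<And>k. (\<integral>x. \<bar>y k x\<bar> \<partial>M) \<le> 1"
      and norming: "\<And>k. 2/3 * N k \<le> (\<integral>x. f (\<nu> k) x * y k x \<partial>M)"
      using norming_sequence_if_not_uniformly_ess_bounded[OF S f_meas f_bounded f_support unbounded]
      by blast
    obtain h where h: "integrable M h" and not_Bseq: "\<not> Bseq (\<lambda>k. \<integral>x. f (\<nu> k) x * h x \<partial>M)"
      using gliding_hump[of "\<lambda>k. f (\<nu> k)", OF f_meas bound growth y norming] by blast
    have "Bseq (\<lambda>k. \<integral>x. f (\<nu> k) x * h x \<partial>M)"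
      using Bseq[OF h] by (auto simp: Bseq_def)
    with not_Bseq show False ..
  qed
  with that show thesis by blast
qed

section \<open>Integral operators with bounded kernels\<close>

lemma sigma_finite_lebesgue: "sigma_finite_measure (lebesgue :: 'a::euclidean_space measure)"
proof -
  obtain A :: "'a set set" where "countable A" "A \<subseteq> sets lborel" "\<Union>A = space lborel"
    "\<forall>a\<in>A. emeasure lborel a \<noteq> \<infinity>"
    using sigma_finite_measure.sigma_finite_countable[OF lborel.sigma_finite_measure_axioms] by blast
  then show ?thesis
    by (intro sigma_finite_measure.intro exI[of _ A]) (auto simp: subset_eq)
qed

lemma borel_measurable_lebesgue_pair:
  fixes f :: "'a::euclidean_space \<times> 'b::euclidean_space \<Rightarrow> real"
  assumes "f \<in> borel_measurable borel"
  shows "f \<in> borel_measurable (lebesgue \<Otimes>\<^sub>M lebesgue)"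
proof -
  have "(\<lambda>z. (fst z, snd z)) \<in> (lebesgue \<Otimes>\<^sub>M lebesgue) \<rightarrow>\<^sub>M (borel \<Otimes>\<^sub>M borel :: ('a \<times> 'b) measure)"
    by (intro measurable_Pair measurable_compose[OF measurable_fst] measurable_compose[OF measurable_snd])
      (simp_all add: measurable_completion)
  then have "(\<lambda>z. z) \<in> (lebesgue \<Otimes>\<^sub>M lebesgue) \<rightarrow>\<^sub>M (borel :: ('a \<times> 'b) measure)"
    by (simp add: borel_prod)
  from measurable_compose[OF this assms] show ?thesis by simp
qed

lemma borel_measurable_lebesgue_section:
  fixes K :: "'a::euclidean_space \<Rightarrow> 'b::euclidean_space \<Rightarrow> real"
  assumes "case_prod K \<in> borel_measurable borel"
  shows "K a \<in> borel_measurable lebesgue"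
proof -
  have "(\<lambda>b. (a, b)) \<in> (lebesgue :: 'b measure) \<rightarrow>\<^sub>M (borel :: ('a \<times> 'b) measure)"
    by (intro measurable_completion) simp
  from measurable_compose[OF this assms] show ?thesis by simp
qed

definition integral_operator ::
    "('a::euclidean_space \<Rightarrow> 'b::euclidean_space \<Rightarrow> real) \<Rightarrow> ('b \<Rightarrow> real) \<Rightarrow> 'a \<Rightarrow> real"
  where "integral_operator K g a = (\<integral>b. K a b * g b \<partial>lebesgue)"

lemma borel_measurable_integral_operator:
  assumes "case_prod K \<in> borel_measurable borel" and "g \<in> borel_measurable lebesgue"
  shows "integral_operator K g \<in> borel_measurable lebesgue"
proof -
  interpret sigma_finite_measure lebesgue by (rule sigma_finite_lebesgue)
  have "(\<lambda>z. K (fst z) (snd z) * g (snd z)) \<in> borel_measurable (lebesgue \<Otimes>\<^sub>M lebesgue)"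
    using borel_measurable_lebesgue_pair[OF assms(1)] assms(2) by (simp add: case_prod_beta')
  then show ?thesis
    unfolding integral_operator_def[abs_def]
    by (intro borel_measurable_lebesgue_integral) (simp add: case_prod_beta)
qed

lemma abs_integral_operator_le:
  assumes "case_prod K \<in> borel_measurable borel" and "\<And>a b. \<bar>K a b\<bar> \<le> CK"
    and "integrable lebesgue g"
  shows "\<bar>integral_operator K g a\<bar> \<le> CK * (\<integral>b. \<bar>g b\<bar> \<partial>lebesgue)"
  unfolding integral_operator_def
  using assms by (intro abs_integral_ess_bounded_mult_le borel_measurable_lebesgue_section) auto

lemma abs_integral_operator_support_le:
  assumes K_meas: "case_prod K \<in> borel_measurable borel" and K_bound: "\<And>a b. \<bar>K a b\<bar> \<le> CK"
    and S: "S \<in> sets lebesgue" "emeasure lebesgue S < \<infinity>"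
    and g: "g \<in> borel_measurable lebesgue" "AE x in lebesgue. \<bar>g x\<bar> \<le> B"
    and g_support: "\<And>x. x \<notin> S \<Longrightarrow> g x = 0"
  shows "\<bar>integral_operator K g a\<bar> \<le> CK * (\<bar>B\<bar> * measure lebesgue S)"
proof -
  have g_int: "integrable lebesgue g"
    by (rule integrable_ess_bounded_support[OF S g g_support])
  have "integrable lebesgue (\<lambda>x. indicator S x * \<bar>B\<bar>)"
    using integrable_real_indicator[OF S] by simp
  then have "(\<integral>x. \<bar>g x\<bar> \<partial>lebesgue) \<le> (\<integral>x. indicator S x * \<bar>B\<bar> \<partial>lebesgue)"
    using g(2) g_int
    by (intro integral_mono_AE) (auto simp: g_support indicator_def elim!: eventually_mono)
  also have "\<dots> = \<bar>B\<bar> * measure lebesgue S"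
    using S by simp
  finally have "(\<integral>x. \<bar>g x\<bar> \<partial>lebesgue) \<le> \<bar>B\<bar> * measure lebesgue S" .
  moreover have "0 \<le> CK" by (meson K_bound abs_ge_zero order_trans)
  ultimately show ?thesis
    using abs_integral_operator_le[OF K_meas K_bound g_int, of a] by (meson mult_left_mono order_trans)
qed

definition weak_star_tendsto :: "'a measure \<Rightarrow> (nat \<Rightarrow> 'a \<Rightarrow> real) \<Rightarrow> ('a \<Rightarrow> real) \<Rightarrow> bool" where
  "weak_star_tendsto M f f0 \<longleftrightarrow>
     (\<forall>h. integrable M h \<longrightarrow> (\<lambda>n. \<integral>x. f n x * h x \<partial>M) \<longlonglongrightarrow> (\<integral>x. f0 x * h x \<partial>M))"

lemma integral_operator_tendsto:
  fixes K :: "'a::euclidean_space \<Rightarrow> 'a \<Rightarrow> real"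
  assumes K_meas: "case_prod K \<in> borel_measurable borel" and K_bound: "\<And>a b. \<bar>K a b\<bar> \<le> CK"
    and S: "S \<in> sets lebesgue" "emeasure lebesgue S < \<infinity>"
    and g_support: "\<And>n x. x \<notin> S \<Longrightarrow> g n x = 0" "\<And>x. x \<notin> S \<Longrightarrow> g0 x = 0"
    and weak: "weak_star_tendsto lebesgue g g0"
  shows "(\<lambda>n. integral_operator K (g n) a) \<longlonglongrightarrow> integral_operator K g0 a"
proof -
  have "0 \<le> CK" using K_bound[of a a] by linarith
  moreover have "(\<lambda>b. indicator S b * K a b) \<in> borel_measurable lebesgue"
    by (intro borel_measurable_times borel_measurable_indicator S(1)
        borel_measurable_lebesgue_section[OF K_meas])
  ultimately have "integrable lebesgue (\<lambda>b. indicator S b * K a b)"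
    using K_bound by (intro integrable_ess_bounded_support[OF S, where B=CK] AE_I2) (auto simp: indicator_def)
  with weak have "(\<lambda>n. \<integral>b. g n b * (indicator S b * K a b) \<partial>lebesgue)
      \<longlonglongrightarrow> (\<integral>b. g0 b * (indicator S b * K a b) \<partial>lebesgue)"
    by (simp add: weak_star_tendsto_def)
  moreover have "g' b * (indicator S b * K a b) = K a b * g' b" if "\<And>x. x \<notin> S \<Longrightarrow> g' x = 0" for g' b
    using that[of b] by (cases "b \<in> S") auto
  ultimately show ?thesis
    using g_support by (simp add: integral_operator_def)
qed

lemma integral_operator_tendsto_L1:
  fixes K :: "'a::euclidean_space \<Rightarrow> 'a \<Rightarrow> real"
  assumes K_meas: "case_prod K \<in> borel_measurable borel" and K_bound: "\<And>a b. \<bar>K a b\<bar> \<le> CK"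
    and S: "S \<in> sets lebesgue" "emeasure lebesgue S < \<infinity>"
    and g_meas: "\<And>n. g n \<in> borel_measurable lebesgue" "g0 \<in> borel_measurable lebesgue"
    and g_bound: "\<And>n. AE x in lebesgue. \<bar>g n x\<bar> \<le> B" "AE x in lebesgue. \<bar>g0 x\<bar> \<le> B"
    and g_support: "\<And>n x. x \<notin> S \<Longrightarrow> g n x = 0" "\<And>x. x \<notin> S \<Longrightarrow> g0 x = 0"
    and weak: "weak_star_tendsto lebesgue g g0"
  shows "(\<lambda>n. \<integral>a. indicator S a * \<bar>integral_operator K (g n) a - integral_operator K g0 a\<bar> \<partial>lebesgue)
    \<longlonglongrightarrow> 0"
proof -
  define D where "D = CK * (\<bar>B\<bar> * measure lebesgue S)"
  have H_bound: "\<bar>integral_operator K (g n) a\<bar> \<le> D" "\<bar>integral_operator K g0 a\<bar> \<le> D" for n a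
    unfolding D_def using S g_meas g_bound g_support
    by (intro abs_integral_operator_support_le[OF K_meas K_bound]; simp)+
  have H_lim: "(\<lambda>n. integral_operator K (g n) a) \<longlonglongrightarrow> integral_operator K g0 a" for a
    by (rule integral_operator_tendsto[OF K_meas K_bound S g_support weak])
  define d where "d n a = indicator S a * \<bar>integral_operator K (g n) a - integral_operator K g0 a\<bar>" for n a
  have d_meas: "d n \<in> borel_measurable lebesgue" for n
    unfolding d_def using borel_measurable_integral_operator[OF K_meas] g_meas S by measurable
  have w_int: "integrable lebesgue (\<lambda>a. indicator S a * (2 * D))"
    using integrable_real_indicator[OF S] by simp
  have d_lim: "AE a in lebesgue. (\<lambda>n. d n a) \<longlonglongrightarrow> 0"
    unfolding d_def using H_lim by (intro AE_I2 tendsto_mult_right_zero tendsto_rabs_zero LIM_zero)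
  have d_bound: "AE a in lebesgue. norm (d n a) \<le> indicator S a * (2 * D)" for n
  proof (intro AE_I2)
    fix a
    have "\<bar>integral_operator K (g n) a - integral_operator K g0 a\<bar> \<le> 2 * D"
      using H_bound(1)[where n=n and a=a] H_bound(2)[where a=a] by linarith
    then show "norm (d n a) \<le> indicator S a * (2 * D)"
      by (simp add: d_def indicator_def)
  qed
  have "(\<lambda>n. \<integral>a. d n a \<partial>lebesgue) \<longlonglongrightarrow> (\<integral>a. 0 \<partial>(lebesgue :: 'a measure))"
    by (rule Bochner_Integration.integral_dominated_convergence[OF _ d_meas w_int d_lim d_bound]) simp
  then show ?thesis by (simp add: d_def)
qed

lemma integral_operator_form_tendsto:
  fixes K :: "'a::euclidean_space \<Rightarrow> 'a \<Rightarrow> real"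
  assumes K_meas: "case_prod K \<in> borel_measurable borel" and K_bound: "\<And>a b. \<bar>K a b\<bar> \<le> CK"
    and S: "S \<in> sets lebesgue" "emeasure lebesgue S < \<infinity>"
    and f_meas: "\<And>n. f n \<in> borel_measurable lebesgue"
    and f_bound: "\<And>n. AE x in lebesgue. \<bar>f n x\<bar> \<le> B"
    and f_support: "\<And>n x. x \<notin> S \<Longrightarrow> f n x = 0" "\<And>x. x \<notin> S \<Longrightarrow> f0 x = 0"
    and g_meas: "\<And>n. g n \<in> borel_measurable lebesgue" "g0 \<in> borel_measurable lebesgue"
    and g_bound: "\<And>n. AE x in lebesgue. \<bar>g n x\<bar> \<le> B" "AE x in lebesgue. \<bar>g0 x\<bar> \<le> B"
    and g_support: "\<And>n x. x \<notin> S \<Longrightarrow> g n x = 0" "\<And>x. x \<notin> S \<Longrightarrow> g0 x = 0"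
    and weak_f: "weak_star_tendsto lebesgue f f0" and weak_g: "weak_star_tendsto lebesgue g g0"
  shows "(\<lambda>n. \<integral>a. f n a * integral_operator K (g n) a \<partial>lebesgue)
    \<longlonglongrightarrow> (\<integral>a. f0 a * integral_operator K g0 a \<partial>lebesgue)"
proof -
  define u where "u g' a = indicator S a * integral_operator K g' a" for g' a
  have u_int: "integrable lebesgue (u g')"
    if "g' \<in> borel_measurable lebesgue" "AE x in lebesgue. \<bar>g' x\<bar> \<le> B" "\<And>x. x \<notin> S \<Longrightarrow> g' x = 0"
    for g'
    unfolding u_def using S that borel_measurable_integral_operator[OF K_meas that(1)]
      abs_integral_operator_support_le[OF K_meas K_bound S that]
    by (intro integrable_ess_bounded_support[OF S, where B="CK * (\<bar>B\<bar> * measure lebesgue S)"] AE_I2)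
      (auto simp: indicator_def intro: order_trans[OF abs_ge_zero])
  have restrict: "f' a * integral_operator K g' a = f' a * u g' a" if "\<And>x. x \<notin> S \<Longrightarrow> f' x = 0" for f' g' a
    using that[of a] by (cases "a \<in> S") (auto simp: u_def)
  have "(\<lambda>n. \<integral>a. f n a * u (g n) a \<partial>lebesgue) \<longlonglongrightarrow> (\<integral>a. f0 a * u g0 a \<partial>lebesgue)"
  proof (rule tendsto_integral_mult_weak_strong[OF f_meas f_bound])
    show "integrable lebesgue (u (g n))" for n
      using g_meas g_bound g_support by (intro u_int)
    show "integrable lebesgue (u g0)"
      using g_meas g_bound g_support by (intro u_int)
    show "(\<lambda>n. \<integral>x. \<bar>u (g n) x - u g0 x\<bar> \<partial>lebesgue) \<longlonglongrightarrow> 0"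
      using integral_operator_tendsto_L1[OF K_meas K_bound S g_meas g_bound g_support weak_g]
      by (simp add: u_def abs_mult flip: right_diff_distrib)
    show "(\<lambda>n. \<integral>x. f n x * u g0 x \<partial>lebesgue) \<longlonglongrightarrow> (\<integral>x. f0 x * u g0 x \<partial>lebesgue)"
      using weak_f \<open>integrable lebesgue (u g0)\<close> by (simp add: weak_star_tendsto_def)
  qed
  then show ?thesis
    by (simp add: restrict f_support)
qed

section \<open>The form \<open>\<omega>\<^sub>p\<close> as a difference of kernel forms\<close>

definition restrict_0pi :: "(real \<Rightarrow> real) \<Rightarrow> real \<Rightarrow> real" where
  "restrict_0pi g x = indicator {0..<pi} x * g x"

lemma restrict_0pi_outside [simp]: "x \<notin> {0..<pi} \<Longrightarrow> restrict_0pi g x = 0"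
  by (simp add: restrict_0pi_def)

lemma Linf_0pi_bounded_linear:
  fixes \<gamma> :: "real \<Rightarrow> 'b::real_normed_vector" and l :: "'b \<Rightarrow> real"
  assumes \<gamma>: "Linf_0pi \<gamma>" and l: "bounded_linear l"
  shows "Linf_0pi (\<lambda>x. l (\<gamma> x))"
proof -
  interpret l: bounded_linear l by (rule l)
  obtain C where C: "AE x in lebesgue. x \<in> {0..<pi} \<longrightarrow> norm (\<gamma> x) \<le> C"
    using \<gamma> by (auto simp: Linf_0pi_def)
  obtain L where L: "\<And>v. norm (l v) \<le> norm v * L" and "0 < L"
    using l.pos_bounded by blast
  have "(\<lambda>x. l (indicator {0..<pi} x *\<^sub>R \<gamma> x)) \<in> borel_measurable lebesgue"
    using \<gamma> borel_measurable_continuous_onI[OF linear_continuous_on[OF l]]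
    by (auto simp: Linf_0pi_def set_borel_measurable_def)
  then have "set_borel_measurable lebesgue {0..<pi} (\<lambda>x. l (\<gamma> x))"
    by (simp add: set_borel_measurable_def l.scale)
  moreover have "AE x in lebesgue. x \<in> {0..<pi} \<longrightarrow> norm (l (\<gamma> x)) \<le> C * L"
    using C by eventually_elim (meson L \<open>0 < L\<close> less_imp_le mult_right_mono order_trans)
  ultimately show ?thesis
    by (auto simp: Linf_0pi_def)
qed

lemma restrict_0pi_measurable_bounded:
  assumes "Linf_0pi g"
  shows "restrict_0pi g \<in> borel_measurable lebesgue"
    and "\<exists>C. AE x in lebesgue. \<bar>restrict_0pi g x\<bar> \<le> C"
proof -
  show "restrict_0pi g \<in> borel_measurable lebesgue"
    using assms by (simp add: Linf_0pi_def set_borel_measurable_def restrict_0pi_def[abs_def])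
  obtain C where "AE x in lebesgue. x \<in> {0..<pi} \<longrightarrow> \<bar>g x\<bar> \<le> C"
    using assms by (auto simp: Linf_0pi_def)
  then have "AE x in lebesgue. \<bar>restrict_0pi g x\<bar> \<le> \<bar>C\<bar>"
    by eventually_elim (auto simp: restrict_0pi_def indicator_def)
  then show "\<exists>C. AE x in lebesgue. \<bar>restrict_0pi g x\<bar> \<le> C" ..
qed

lemma integrable_restrict_0pi:
  assumes "Linf_0pi g"
  shows "integrable lebesgue (restrict_0pi g)"
proof -
  obtain C where "AE x in lebesgue. \<bar>restrict_0pi g x\<bar> \<le> C"
    using restrict_0pi_measurable_bounded(2)[OF assms] by blast
  then show ?thesis
    using restrict_0pi_measurable_bounded(1)[OF assms]
    by (intro integrable_ess_bounded_support[of "{0..<pi}"]) auto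
qed

lemma weak_star_tendsto_restrict_0pi:
  assumes "weak_star_conv_0pi gs g"
  shows "weak_star_tendsto lebesgue (\<lambda>n. restrict_0pi (gs n)) (restrict_0pi g)"
  unfolding weak_star_tendsto_def
proof (intro allI impI)
  fix h :: "real \<Rightarrow> real" assume "integrable lebesgue h"
  then have "set_integrable lebesgue {0..<pi} h"
    using integrable_real_mult_indicator[of "{0..<pi}" lebesgue h] by (simp add: set_integrable_def mult.commute)
  with assms show "(\<lambda>n. \<integral>x. restrict_0pi (gs n) x * h x \<partial>lebesgue)
      \<longlonglongrightarrow> (\<integral>x. restrict_0pi g x * h x \<partial>lebesgue)"
    by (simp add: weak_star_conv_0pi_def set_lebesgue_integral_def restrict_0pi_def mult.assoc)
qed

lemma weak_star_conv_0pi_uniform_bound: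
  assumes gs: "\<And>n. Linf_0pi (gs n)" and g: "Linf_0pi g" and conv: "weak_star_conv_0pi gs g"
  obtains C where "\<And>n. AE x in lebesgue. \<bar>restrict_0pi (gs n) x\<bar> \<le> C"
    and "AE x in lebesgue. \<bar>restrict_0pi g x\<bar> \<le> C"
proof -
  obtain C1 where C1: "\<And>n. AE x in lebesgue. \<bar>restrict_0pi (gs n) x\<bar> \<le> C1"
  proof (rule uniform_ess_bound_if_Bseq_integral_mult[where S="{0..<pi}"])
    show "Bseq (\<lambda>n. \<integral>x. restrict_0pi (gs n) x * h x \<partial>lebesgue)" if "integrable lebesgue h" for h
      using weak_star_tendsto_restrict_0pi[OF conv] that
      by (intro convergent_imp_Bseq convergentI) (auto simp: weak_star_tendsto_def)
  qed (use restrict_0pi_measurable_bounded[OF gs] in auto)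
  obtain C2 where C2: "AE x in lebesgue. \<bar>restrict_0pi g x\<bar> \<le> C2"
    using restrict_0pi_measurable_bounded(2)[OF g] by blast
  show thesis
  proof (rule that[of "max C1 C2"])
    show "AE x in lebesgue. \<bar>restrict_0pi (gs n) x\<bar> \<le> max C1 C2" for n
      using C1[of n] by eventually_elim auto
    show "AE x in lebesgue. \<bar>restrict_0pi g x\<bar> \<le> max C1 C2"
      using C2 by eventually_elim auto
  qed
qed

lemma AE_lebesgue_pair:
  fixes P :: "'a::euclidean_space \<times> 'b::euclidean_space \<Rightarrow> bool"
  assumes "AE z in lebesgue. P z"
  shows "AE a in lebesgue. AE b in lebesgue. P (a, b)"
proof -
  have "AE z in lborel. P z"
    using assms by (simp add: AE_completion_iff)
  then have "AE z in lborel \<Otimes>\<^sub>M lborel. P z"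
    unfolding lborel_prod .
  then have "AE a in lborel. AE b in lborel. P (a, b)"
    by (rule lborel_pair.AE_pair)
  then show ?thesis
    by (simp add: AE_completion_iff)
qed

text \<open>\<open>p\<close> is only Lebesgue measurable on the plane; a Borel version is needed for the sections
  \<open>K a\<close> and for \<open>integral_operator K\<close> to be measurable.\<close>

lemma upper_triangular_borel_kernel_exists:
  fixes p :: "real \<Rightarrow> real \<Rightarrow> real"
  assumes p_meas: "(\<lambda>(a, b). p a b) \<in> borel_measurable (lebesgue :: (real \<times> real) measure)"
    and p_bdd: "AE x in (lebesgue :: (real \<times> real) measure). \<bar>p (fst x) (snd x)\<bar> \<le> C"
  obtains K where "case_prod K \<in> borel_measurable borel" and "\<And>a b. \<bar>K a b\<bar> \<le> \<bar>C\<bar>"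
    and "\<And>a b. b < a \<Longrightarrow> K a b = 0" and "AE a in lebesgue. AE b in lebesgue. a \<le> b \<longrightarrow> p a b = K a b"
proof -
  obtain q' where q'_meas: "q' \<in> borel_measurable (lborel :: (real \<times> real) measure)"
    and q'_ae: "AE z in lborel. (\<lambda>(a, b). p a b) z = q' z"
    using completion_ex_borel_measurable_real[OF p_meas] by blast
  define q where "q z = (if \<bar>q' z\<bar> \<le> C then q' z else 0)" for z
  have q_meas[measurable]: "q \<in> borel_measurable borel"
    using q'_meas unfolding q_def[abs_def] by measurable
  have "AE z in lborel. p (fst z) (snd z) = q z"
    using q'_ae p_bdd[unfolded AE_completion_iff] by eventually_elim (auto simp: q_def case_prod_beta)
  then have pq: "AE a in lebesgue. AE b in lebesgue. p a b = q (a, b)"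
    using AE_lebesgue_pair[OF AE_completion] by force
  define K where "K a b = (if a \<le> b then q (a, b) else 0)" for a b
  show thesis
  proof
    have "{z :: real \<times> real. fst z \<le> snd z} \<in> sets borel"
      by (intro borel_closed closed_Collect_le continuous_intros)
    then have "(\<lambda>z. indicator {z :: real \<times> real. fst z \<le> snd z} z * q z) \<in> borel_measurable borel"
      by (intro borel_measurable_times borel_measurable_indicator q_meas)
    moreover have "case_prod K = (\<lambda>z. indicator {z. fst z \<le> snd z} z * q z)"
      by (auto simp: K_def indicator_def fun_eq_iff)
    ultimately show "case_prod K \<in> borel_measurable borel"
      by simp
    show "\<bar>K a b\<bar> \<le> \<bar>C\<bar>" for a b
      by (simp add: K_def q_def)
    show "K a b = 0" if "b < a" for a b
      using that by (simp add: K_def)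
    show "AE a in lebesgue. AE b in lebesgue. a \<le> b \<longrightarrow> p a b = K a b"
      using pq by eventually_elim (auto simp: K_def elim: eventually_mono)
  qed
qed

lemma set_integral_cross2_eq_integral_operator:
  fixes p K :: "real \<Rightarrow> real \<Rightarrow> real" and \<gamma> :: "real \<Rightarrow> real \<times> real"
  assumes u1_def: "u1 = restrict_0pi (\<lambda>x. fst (\<gamma> x))" and u2_def: "u2 = restrict_0pi (\<lambda>x. snd (\<gamma> x))"
    and u_meas: "u1 \<in> borel_measurable lebesgue" "u2 \<in> borel_measurable lebesgue"
    and K_meas: "case_prod K \<in> borel_measurable borel" and K_lower: "\<And>a b. b < a \<Longrightarrow> K a b = 0"
    and K_int: "integrable lebesgue (\<lambda>b. K \<alpha> b * u1 b)" "integrable lebesgue (\<lambda>b. K \<alpha> b * u2 b)"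
    and \<alpha>: "\<alpha> \<in> {0..<pi}" and pK: "AE b in lebesgue. \<alpha> \<le> b \<longrightarrow> p \<alpha> b = K \<alpha> b"
  shows "(LINT \<beta>:{\<alpha>..<pi}|lebesgue. p \<alpha> \<beta> * cross2 (\<gamma> \<alpha>) (\<gamma> \<beta>))
    = u1 \<alpha> * integral_operator K u2 \<alpha> - u2 \<alpha> * integral_operator K u1 \<alpha>"
proof -
  define J where "J \<beta> = u1 \<alpha> * (K \<alpha> \<beta> * u2 \<beta>) - u2 \<alpha> * (K \<alpha> \<beta> * u1 \<beta>)" for \<beta>
  have J_meas: "J \<in> borel_measurable lebesgue"
    unfolding J_def using u_meas borel_measurable_lebesgue_section[OF K_meas] by measurable
  have "AE \<beta> in lebesgue. J \<beta> = indicator {\<alpha>..<pi} \<beta> * (p \<alpha> \<beta> * cross2 (\<gamma> \<alpha>) (\<gamma> \<beta>))"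
    using pK
  proof eventually_elim
    case (elim \<beta>)
    consider "\<beta> < \<alpha>" | "\<alpha> \<le> \<beta>" "\<beta> < pi" | "pi \<le> \<beta>" by linarith
    then show ?case
    proof cases
      case 1
      then show ?thesis by (simp add: J_def K_lower)
    next
      case 2
      with \<alpha> elim show ?thesis
        by (simp add: J_def u1_def u2_def restrict_0pi_def cross2_def algebra_simps)
    next
      case 3
      then show ?thesis by (simp add: J_def u1_def u2_def)
    qed
  qed
  then have "(LINT \<beta>:{\<alpha>..<pi}|lebesgue. p \<alpha> \<beta> * cross2 (\<gamma> \<alpha>) (\<gamma> \<beta>))
      = (\<integral>\<beta>. J \<beta> \<partial>lebesgue)"
    unfolding set_lebesgue_integral_def
    by (intro integral_cong_AE borel_measurable_AE[OF J_meas]) (auto elim: eventually_mono)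
  also have "\<dots> = u1 \<alpha> * integral_operator K u2 \<alpha> - u2 \<alpha> * integral_operator K u1 \<alpha>"
    using K_int by (simp add: J_def integral_operator_def)
  finally show ?thesis .
qed

lemma integrable_restrict_0pi_mult_integral_operator:
  assumes K_meas: "case_prod K \<in> borel_measurable borel" and K_bound: "\<And>a b. \<bar>K a b\<bar> \<le> CK"
    and f: "Linf_0pi f" and g: "Linf_0pi g"
  shows "integrable lebesgue (\<lambda>a. restrict_0pi f a * integral_operator K (restrict_0pi g) a)"
proof -
  note g_meas = restrict_0pi_measurable_bounded(1)[OF g]
  obtain B where "AE x in lebesgue. \<bar>restrict_0pi g x\<bar> \<le> B"
    using restrict_0pi_measurable_bounded(2)[OF g] by blast
  then have "\<bar>integral_operator K (restrict_0pi g) a\<bar> \<le> CK * (\<bar>B\<bar> * measure lebesgue {0..<pi})" for a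
    by (intro abs_integral_operator_support_le[OF K_meas K_bound _ _ g_meas]) auto
  from integrable_ess_bounded_mult[OF borel_measurable_integral_operator[OF K_meas g_meas] AE_I2[OF this]
      integrable_restrict_0pi[OF f]]
  show ?thesis
    by (simp add: mult.commute)
qed

lemma omega_p_eq_integral_operator_forms:
  fixes p K :: "real \<Rightarrow> real \<Rightarrow> real" and \<gamma> :: "real \<Rightarrow> real \<times> real"
  assumes \<gamma>: "Linf_0pi \<gamma>"
    and u1_def: "u1 = restrict_0pi (\<lambda>x. fst (\<gamma> x))" and u2_def: "u2 = restrict_0pi (\<lambda>x. snd (\<gamma> x))"
    and K_meas: "case_prod K \<in> borel_measurable borel" and K_bound: "\<And>a b. \<bar>K a b\<bar> \<le> CK"
    and K_lower: "\<And>a b. b < a \<Longrightarrow> K a b = 0"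
    and pK: "AE a in lebesgue. AE b in lebesgue. a \<le> b \<longrightarrow> p a b = K a b"
  shows "omega_p p \<gamma> = (\<integral>a. u1 a * integral_operator K u2 a \<partial>lebesgue)
                      - (\<integral>a. u2 a * integral_operator K u1 a \<partial>lebesgue)"
proof -
  have coordinates: "Linf_0pi (\<lambda>x. fst (\<gamma> x))" "Linf_0pi (\<lambda>x. snd (\<gamma> x))"
    using Linf_0pi_bounded_linear[OF \<gamma>] bounded_linear_fst bounded_linear_snd by auto
  have u_meas: "u1 \<in> borel_measurable lebesgue" "u2 \<in> borel_measurable lebesgue"
    using restrict_0pi_measurable_bounded(1)[OF coordinates(1)]
      restrict_0pi_measurable_bounded(1)[OF coordinates(2)] by (simp_all add: u1_def u2_def)
  have K_int: "integrable lebesgue (\<lambda>b. K a b * u1 b)" "integrable lebesgue (\<lambda>b. K a b * u2 b)" for a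
    using K_bound integrable_restrict_0pi[OF coordinates(1)] integrable_restrict_0pi[OF coordinates(2)]
    by (auto simp: u1_def u2_def intro!: integrable_ess_bounded_mult borel_measurable_lebesgue_section[OF K_meas])
  define G where "G a = u1 a * integral_operator K u2 a - u2 a * integral_operator K u1 a" for a
  have G_meas: "G \<in> borel_measurable lebesgue"
    unfolding G_def using u_meas borel_measurable_integral_operator[OF K_meas] by measurable
  have "AE a in lebesgue. G a =
      indicator {0..<pi} a * (LINT b:{a..<pi}|lebesgue. p a b * cross2 (\<gamma> a) (\<gamma> b))"
    using pK
  proof eventually_elim
    case (elim a)
    show ?case
      using set_integral_cross2_eq_integral_operator[where \<gamma>=\<gamma> and p=p and K=K and \<alpha>=a,
          OF u1_def u2_def u_meas K_meas K_lower K_int _ elim]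
      by (cases "a \<in> {0..<pi}") (simp_all add: G_def u1_def u2_def)
  qed
  then have "omega_p p \<gamma> = (\<integral>a. G a \<partial>lebesgue)"
    unfolding omega_p_def set_lebesgue_integral_def
    by (intro integral_cong_AE borel_measurable_AE[OF G_meas]) (auto elim: eventually_mono)
  also have "\<dots> = (\<integral>a. u1 a * integral_operator K u2 a \<partial>lebesgue)
                      - (\<integral>a. u2 a * integral_operator K u1 a \<partial>lebesgue)"
    using integrable_restrict_0pi_mult_integral_operator[OF K_meas K_bound coordinates]
      integrable_restrict_0pi_mult_integral_operator[OF K_meas K_bound coordinates(2,1)]
    by (simp add: G_def u1_def u2_def)
  finally show ?thesis .
qed

lemma integral_operator_form_tendsto_0pi:
  fixes K :: "real \<Rightarrow> real \<Rightarrow> real"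
  assumes K_meas: "case_prod K \<in> borel_measurable borel" and K_bound: "\<And>a b. \<bar>K a b\<bar> \<le> CK"
    and f: "\<And>n. Linf_0pi (fs n)" "Linf_0pi f0" "weak_star_conv_0pi fs f0"
    and g: "\<And>n. Linf_0pi (gs n)" "Linf_0pi g0" "weak_star_conv_0pi gs g0"
  shows "(\<lambda>n. \<integral>a. restrict_0pi (fs n) a * integral_operator K (restrict_0pi (gs n)) a \<partial>lebesgue)
    \<longlonglongrightarrow> (\<integral>a. restrict_0pi f0 a * integral_operator K (restrict_0pi g0) a \<partial>lebesgue)"
proof -
  obtain Bf where Bf: "\<And>n. AE x in lebesgue. \<bar>restrict_0pi (fs n) x\<bar> \<le> Bf"
    using weak_star_conv_0pi_uniform_bound[OF f] by blast
  obtain Bg where Bg: "\<And>n. AE x in lebesgue. \<bar>restrict_0pi (gs n) x\<bar> \<le> Bg"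
    and Bg0: "AE x in lebesgue. \<bar>restrict_0pi g0 x\<bar> \<le> Bg"
    using weak_star_conv_0pi_uniform_bound[OF g] by blast
  have f_bound: "AE x in lebesgue. \<bar>restrict_0pi (fs n) x\<bar> \<le> max Bf Bg" for n
    using Bf[of n] by eventually_elim auto
  have g_bound: "AE x in lebesgue. \<bar>restrict_0pi (gs n) x\<bar> \<le> max Bf Bg" for n
    using Bg[of n] by eventually_elim auto
  have g0_bound: "AE x in lebesgue. \<bar>restrict_0pi g0 x\<bar> \<le> max Bf Bg"
    using Bg0 by eventually_elim auto
  have S: "{0..<pi} \<in> sets lebesgue" "emeasure lebesgue {0..<pi} < \<infinity>"
    by simp_all
  note measurable = restrict_0pi_measurable_bounded(1)
  show ?thesis
    using integral_operator_form_tendsto[OF K_meas K_bound S measurable[OF f(1)] f_bound _ _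
        measurable[OF g(1)] measurable[OF g(2)] g_bound g0_bound _ _
        weak_star_tendsto_restrict_0pi[OF f(3)] weak_star_tendsto_restrict_0pi[OF g(3)]]
    by simp
qed

theorem lemma4p1:
  fixes p :: "real \<Rightarrow> real \<Rightarrow> real"
    and \<gamma>s :: "nat \<Rightarrow> real \<Rightarrow> real \<times> real"
    and \<gamma> :: "real \<Rightarrow> real \<times> real"
  assumes p_meas: "(\<lambda>(a, b). p a b) \<in> borel_measurable (lebesgue :: (real \<times> real) measure)"
    and p_pos: "AE x in (lebesgue :: (real \<times> real) measure). p (fst x) (snd x) > 0"
    and p_sym: "\<And>a b. p a b = p b a"
    and p_per: "\<And>a b. p (a + pi) b = p a b \<and> p a (b + pi) = p a b"
    and p_bdd: "\<exists>C. AE x in (lebesgue :: (real \<times> real) measure). \<bar>p (fst x) (snd x)\<bar> \<le> C"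
    and \<gamma>s_Linf: "\<And>n. Linf_0pi (\<gamma>s n)"
    and \<gamma>_Linf: "Linf_0pi \<gamma>"
    and conv1: "weak_star_conv_0pi (\<lambda>n x. fst (\<gamma>s n x)) (\<lambda>x. fst (\<gamma> x))"
    and conv2: "weak_star_conv_0pi (\<lambda>n x. snd (\<gamma>s n x)) (\<lambda>x. snd (\<gamma> x))"
  shows "(\<lambda>n. omega_p p (\<gamma>s n)) \<longlonglongrightarrow> omega_p p \<gamma>"
proof -
  obtain C where "AE x in (lebesgue :: (real \<times> real) measure). \<bar>p (fst x) (snd x)\<bar> \<le> C"
    using p_bdd by blast
  then obtain K where K_meas: "case_prod K \<in> borel_measurable borel" and K_bound: "\<And>a b. \<bar>K a b\<bar> \<le> \<bar>C\<bar>"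
    and K_lower: "\<And>a b. b < a \<Longrightarrow> K a b = 0"
    and pK: "AE a in lebesgue. AE b in lebesgue. a \<le> b \<longrightarrow> p a b = K a b"
    using upper_triangular_borel_kernel_exists[OF p_meas] by blast
  note decompose = omega_p_eq_integral_operator_forms[OF _ refl refl K_meas K_bound K_lower pK]
  have coordinates_Linf: "Linf_0pi (\<lambda>x. fst (g x))" "Linf_0pi (\<lambda>x. snd (g x))"
    if "Linf_0pi g" for g :: "real \<Rightarrow> real \<times> real"
    using that bounded_linear_fst bounded_linear_snd by (auto intro: Linf_0pi_bounded_linear)
  show ?thesis
    by (simp only: decompose[OF \<gamma>s_Linf] decompose[OF \<gamma>_Linf])
      (intro tendsto_diff integral_operator_form_tendsto_0pi[OF K_meas K_bound]
        coordinates_Linf[OF \<gamma>s_Linf] coordinates_Linf[OF \<gamma>_Linf] conv1 conv2)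
qed

end
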